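(* Let $m,n,k$ be positive integers, $A\in\mathbb{R}^{m\times n}$, $x^*\in\mathbb{R}^n$ with support $S^*$ satisfying $1\le|S^*|\le k$, $e\in\mathbb{R}^m$, $y=Ax^*+e$. For every initialization $\mathcal{X}^0\in\mathbb{R}^n$ and every $\eta>0$, consider the Support Exploration Algorithm using the Oracle Update Rule. Then there exists an integer $$t_s\le k\left(1+\frac{2\|\mathcal{X}^0\|_\infty}{\eta\min_{i\in S^*}|x^*_i|}\right)$$ such that $S^*\subseteq S^{t_s}$. Moreover $u^{t_s}=0$ and the algorithm returns a vector in $\arg\min\{\|Ax-y\|_2^2: x\in\mathbb{R}^n,\ \mathrm{supp}(x)\subseteq S^{t_s}\}$.
   Context: $S^*=\{i:x^*_i\neq0\}$. For $v\in\mathbb{R}^n$, $\mathrm{largest}_k(v)$ is the set of indices of the $k$ entries of $v$ with largest absolute value (ties broken by selecting the highest indices). For $S\subseteq\{1,\dots,n\}$, $A_S$ is the submatrix of columns indexed by $S$ and $A_S^\dagger$ its Moore–Penrose pseudoinverse. The Support Exploration Algorithm using the Oracle Update Rule, with inputs $x^*,S^*,k,\eta,y,A$ and initialization $\mathcal{X}^0$, iterates for $t=0,1,2,\dots$: $S^t=\mathrm{largest}_k(\mathcal{X}^t)$; $u^t\in\mathbb{R}^n$ with $u^t_i=-\eta x^*_i$ if $i\in S^*\setminus S^t$ and $u^t_i=0$ otherwise; $\mathcal{X}^{t+1}=\mathcal{X}^t-u^t$; it stops at the first $t$ such that $u^t=0$ and then returns $x$ with $x_i=0$ for $i\notin S^t$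 and $x_{S^t}=A_{S^t}^\dagger y$. *)

theory Defs
  imports "Jordan_Normal_Form.Matrix"
begin

text \<open>Vectors in R^n are Jordan_Normal_Form vectors of dimension n, indexed 0..n-1;
  matrices in R^(m x n) are JNF matrices with m rows and n columns.\<close>

definition supp_vec :: "real vec \<Rightarrow> nat set" where
  "supp_vec x = {i. i < dim_vec x \<and> x $ i \<noteq> 0}"

definition norm_inf_vec :: "real vec \<Rightarrow> real" where
  "norm_inf_vec x = Max (insert 0 {\<bar>x $ i\<bar> | i. i < dim_vec x})"

text \<open>largest_k(v): indices of the k entries of largest absolute value, ties broken
  by selecting the highest indices.\<close>

definition beats :: "real vec \<Rightarrow> nat \<Rightarrow> nat \<Rightarrow> bool" where
  "beats v j i \<longleftrightarrow> \<bar>v $ j\<bar> > \<bar>v $ i\<bar> \<or> (\<bar>v $ j\<bar> = \<bar>v $ i\<bar> \<and> j > i)"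

definition largest :: "nat \<Rightarrow> real vec \<Rightarrow> nat set" where
  "largest k v = {i. i < dim_vec v \<and> card {j. j < dim_vec v \<and> beats v j i} < k}"

definition col_submat :: "real mat \<Rightarrow> nat set \<Rightarrow> real mat" where
  "col_submat A S = mat (dim_row A) (card S) (\<lambda>(i, j). A $$ (i, sorted_list_of_set S ! j))"

definition pinv :: "real mat \<Rightarrow> real mat" where
  "pinv M = (THE B. B \<in> carrier_mat (dim_col M) (dim_row M) \<and>
      M * B * M = M \<and> B * M * B = B \<and>
      transpose_mat (M * B) = M * B \<and> transpose_mat (B * M) = B * M)"

definition oracle_u :: "real vec \<Rightarrow> nat set \<Rightarrow> nat \<Rightarrow> real \<Rightarrow> real vec \<Rightarrow> real vec" where
  "oracle_u xs Ss k \<eta> X = vec (dim_vec xs)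
     (\<lambda>i. if i \<in> Ss \<and> i \<notin> largest k X then - \<eta> * xs $ i else 0)"

primrec sea_X :: "real vec \<Rightarrow> nat set \<Rightarrow> nat \<Rightarrow> real \<Rightarrow> real vec \<Rightarrow> nat \<Rightarrow> real vec" where
  "sea_X xs Ss k \<eta> X0 0 = X0"
| "sea_X xs Ss k \<eta> X0 (Suc t) =
     sea_X xs Ss k \<eta> X0 t - oracle_u xs Ss k \<eta> (sea_X xs Ss k \<eta> X0 t)"

definition sea_S :: "real vec \<Rightarrow> nat set \<Rightarrow> nat \<Rightarrow> real \<Rightarrow> real vec \<Rightarrow> nat \<Rightarrow> nat set" where
  "sea_S xs Ss k \<eta> X0 t = largest k (sea_X xs Ss k \<eta> X0 t)"

definition sea_u :: "real vec \<Rightarrow> nat set \<Rightarrow> nat \<Rightarrow> real \<Rightarrow> real vec \<Rightarrow> nat \<Rightarrow> real vec" where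
  "sea_u xs Ss k \<eta> X0 t = oracle_u xs Ss k \<eta> (sea_X xs Ss k \<eta> X0 t)"

definition pinv_sol :: "real mat \<Rightarrow> real vec \<Rightarrow> nat set \<Rightarrow> real vec" where
  "pinv_sol A y S = (let z = pinv (col_submat A S) *\<^sub>v y in
     vec (dim_col A) (\<lambda>i. if i \<in> S then z $ (THE j. j < card S \<and> sorted_list_of_set S ! j = i) else 0))"

definition sea_output :: "real vec \<Rightarrow> nat set \<Rightarrow> nat \<Rightarrow> real \<Rightarrow> real vec \<Rightarrow> real mat \<Rightarrow> real vec \<Rightarrow> real vec" where
  "sea_output xs Ss k \<eta> y A X0 =
     pinv_sol A y (sea_S xs Ss k \<eta> X0 (LEAST t. sea_u xs Ss k \<eta> X0 t = 0\<^sub>v (dim_vec xs)))"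

definition sq_resid :: "real mat \<Rightarrow> real vec \<Rightarrow> real vec \<Rightarrow> real" where
  "sq_resid A y x = (A *\<^sub>v x - y) \<bullet> (A *\<^sub>v x - y)"

definition ls_argmin :: "real mat \<Rightarrow> real vec \<Rightarrow> nat set \<Rightarrow> real vec set" where
  "ls_argmin A y S = {x \<in> carrier_vec (dim_col A). supp_vec x \<subseteq> S \<and>
     (\<forall>z \<in> carrier_vec (dim_col A). supp_vec z \<subseteq> S \<longrightarrow> sq_resid A y x \<le> sq_resid A y z)}"

end

theory Submission
  imports Defs "Jordan_Normal_Form.Determinant"
begin

text \<open>Coordinates outside the support \<open>S*\<close> never move, and a coordinate \<open>i \<in> S*\<close> moves by
  \<open>\<eta> x*_i\<close> each time it is missed by \<open>S^t\<close>; after \<open>c\<close> misses it equals \<open>X^0_i + c \<eta> x*_i\<close>.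
  When \<open>i\<close> is missed, then, since \<open>|S*| \<le> k\<close>, some coordinate outside \<open>S*\<close> is at least as large
  in absolute value; that coordinate still has its initial value, so \<open>|X^t_i| \<le> \<parallel>X^0\<parallel>\<^sub>\<infinity>\<close> and
  hence \<open>c \<eta> |x*_i| \<le> 2 \<parallel>X^0\<parallel>\<^sub>\<infinity>\<close>. So every \<open>i \<in> S*\<close> is missed at most
  \<open>1 + 2 \<parallel>X^0\<parallel>\<^sub>\<infinity> / (\<eta> min |x*_i|)\<close> times, while every step before the algorithm stops
  misses some \<open>i \<in> S*\<close>; it stops exactly when \<open>S* \<subseteq> S^t\<close>.

  The returned vector is a least-squares solution because \<open>z = A_S^\<dagger> y\<close> satisfies the normal
  equations \<open>A_S^T (A_S z - y) = 0\<close>, a consequence of the Penrose equations. The pseudoinverse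
  exists by a full-rank factorisation \<open>A_S = F G\<close> obtained from a maximal set of independent
  columns: \<open>G^T (G G^T)^-1 (F^T F)^-1 F^T\<close> satisfies the Penrose equations.\<close>

lemma sum_nth_sorted_list_of_set:
  assumes "finite J"
  shows "(\<Sum>k<card J. f (sorted_list_of_set J ! k)) = (\<Sum>i\<in>J. f i)"
proof -
  have "bij_betw ((!) (sorted_list_of_set J)) {..<card J} J"
    by (rule bij_betw_nth) (use assms in auto)
  then show ?thesis by (rule sum.reindex_bij_betw)
qed

lemma nth_sorted_list_of_set_mem:
  "finite J \<Longrightarrow> k < card J \<Longrightarrow> sorted_list_of_set J ! k \<in> J"
  by (metis length_sorted_list_of_set nth_mem set_sorted_list_of_set)

lemma nth_sorted_list_of_set_eq_iff:
  "finite J \<Longrightarrow> k < card J \<Longrightarrow> k' < card J \<Longrightarrow>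
    sorted_list_of_set J ! k = sorted_list_of_set J ! k' \<longleftrightarrow> k = k'"
  by (simp add: nth_eq_iff_index_eq)

definition sorted_index :: "nat set \<Rightarrow> nat \<Rightarrow> nat" where
  "sorted_index J i = (THE k. k < card J \<and> sorted_list_of_set J ! k = i)"

lemma sorted_index_nth:
  assumes "finite J" "k < card J"
  shows "sorted_index J (sorted_list_of_set J ! k) = k"
  unfolding sorted_index_def
  by (rule the_equality) (use assms nth_sorted_list_of_set_eq_iff in auto)

lemma scalar_prod_self_nonneg: "0 \<le> (v :: real vec) \<bullet> v"
  using conjugate_square_ge_0_vec[of v] by (simp add: scalar_prod_def)

lemma scalar_prod_self_eq_0_iff: "(v :: real vec) \<in> carrier_vec n \<Longrightarrow> v \<bullet> v = 0 \<longleftrightarrow> v = 0\<^sub>v n"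
  using conjugate_square_eq_0_vec[of v n] by (simp add: scalar_prod_def)

lemma scalar_prod_self_add_orthogonal:
  fixes a b :: "real vec"
  assumes "a \<in> carrier_vec n" "b \<in> carrier_vec n" "a \<bullet> b = 0"
  shows "(a + b) \<bullet> (a + b) = a \<bullet> a + b \<bullet> b"
proof -
  have "(a + b) \<bullet> (a + b) = a \<bullet> a + a \<bullet> b + (b \<bullet> a + b \<bullet> b)"
    using assms add_scalar_prod_distrib[of a n b "a + b"]
      scalar_prod_add_distrib[of a n a b] scalar_prod_add_distrib[of b n a b] by simp
  then show ?thesis using assms comm_scalar_prod[of a n b] by simp
qed

section \<open>Linear combinations of columns\<close>

definition col_comb :: "real mat \<Rightarrow> nat set \<Rightarrow> (nat \<Rightarrow> real) \<Rightarrow> real vec" where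
  "col_comb M J c = vec (dim_row M) (\<lambda>r. \<Sum>i\<in>J. c i * M $$ (r, i))"

definition cols_independent :: "real mat \<Rightarrow> nat set \<Rightarrow> bool" where
  "cols_independent M J \<longleftrightarrow> (\<forall>c. col_comb M J c = 0\<^sub>v (dim_row M) \<longrightarrow> (\<forall>i\<in>J. c i = 0))"

lemma col_submat_mult_vec:
  assumes "finite J"
  shows "col_submat M J *\<^sub>v vec (card J) (\<lambda>k. c (sorted_list_of_set J ! k)) = col_comb M J c"
proof (rule eq_vecI)
  fix r assume "r < dim_vec (col_comb M J c)"
  then have r: "r < dim_row M" by (simp add: col_comb_def)
  have "(col_submat M J *\<^sub>v vec (card J) (\<lambda>k. c (sorted_list_of_set J ! k))) $ r
      = (\<Sum>k<card J. M $$ (r, sorted_list_of_set J ! k) * c (sorted_list_of_set J ! k))"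
    using r by (simp add: col_submat_def scalar_prod_def atLeast0LessThan)
  also have "\<dots> = (\<Sum>i\<in>J. c i * M $$ (r, i))"
    using sum_nth_sorted_list_of_set[OF assms, of "\<lambda>i. c i * M $$ (r, i)"] by (simp add: mult.commute)
  finally show "(col_submat M J *\<^sub>v vec (card J) (\<lambda>k. c (sorted_list_of_set J ! k))) $ r
      = col_comb M J c $ r" using r by (simp add: col_comb_def)
qed (simp add: col_submat_def col_comb_def)

lemma mult_mat_vec_eq_col_comb:
  assumes M: "M \<in> carrier_mat m n" and x: "x \<in> carrier_vec n"
    and J: "J \<subseteq> {..<n}" and supp: "supp_vec x \<subseteq> J"
  shows "M *\<^sub>v x = col_comb M J (($) x)"
proof (rule eq_vecI)
  fix r assume "r < dim_vec (col_comb M J (($) x))"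
  then have r: "r < m" using M by (simp add: col_comb_def)
  have "(M *\<^sub>v x) $ r = (\<Sum>i\<in>{0..<n}. x $ i * M $$ (r, i))"
    using M x r by (simp add: scalar_prod_def mult.commute)
  also have "\<dots> = (\<Sum>i\<in>J. x $ i * M $$ (r, i))"
    by (rule sum.mono_neutral_right) (use J supp x in \<open>auto simp: supp_vec_def\<close>)
  finally show "(M *\<^sub>v x) $ r = col_comb M J (($) x) $ r" using M r by (simp add: col_comb_def)
qed (use M in \<open>simp add: col_comb_def\<close>)

lemma col_comb_of_dependent_insert:
  assumes J: "finite J" "j \<notin> J" and indep: "cols_independent M J"
    and dep: "\<not> cols_independent M (insert j J)"
  shows "\<exists>g. col_comb M J g = col M j"
proof -
  obtain c where c0: "col_comb M (insert j J) c = 0\<^sub>v (dim_row M)"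
    and c_nz: "\<exists>i\<in>insert j J. c i \<noteq> 0"
    using dep unfolding cols_independent_def by blast
  have comb: "c j * M $$ (r, j) + col_comb M J c $ r = 0" if "r < dim_row M" for r
    using arg_cong[OF c0, of "\<lambda>v. v $ r"] that J by (simp add: col_comb_def)
  have "c j \<noteq> 0"
  proof
    assume "c j = 0"
    then have "col_comb M J c = 0\<^sub>v (dim_row M)"
      using comb by (intro eq_vecI) (auto simp: col_comb_def)
    then show False using indep c_nz \<open>c j = 0\<close> unfolding cols_independent_def by blast
  qed
  have "col_comb M J (\<lambda>i. - c i / c j) = col M j"
  proof (rule eq_vecI)
    fix r assume "r < dim_vec (col M j)"
    then have r: "r < dim_row M" by simp
    have "col_comb M J (\<lambda>i. - c i / c j) $ r = - col_comb M J c $ r / c j"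
      using r by (simp add: col_comb_def sum_divide_distrib sum_negf)
    also have "\<dots> = M $$ (r, j)" using comb[OF r] \<open>c j \<noteq> 0\<close> by (simp add: field_simps)
    finally show "col_comb M J (\<lambda>i. - c i / c j) $ r = col M j $ r" using r by (simp add: col_def)
  qed (simp add: col_comb_def)
  then show ?thesis by blast
qed

lemma col_comb_indicator:
  assumes "finite J" "j \<in> J"
  shows "col_comb M J (\<lambda>i. of_bool (i = j)) = col M j"
  using assms by (intro eq_vecI) (simp_all add: col_comb_def col_def sum_of_bool_mult_eq)

lemma maximal_independent_columns:
  obtains J where "J \<subseteq> {..<dim_col M}" "cols_independent M J"
    "\<And>j. j < dim_col M \<Longrightarrow> \<exists>g. col_comb M J g = col M j"
proof -
  let ?indep = "\<lambda>J. J \<subseteq> {..<dim_col M} \<and> cols_independent M J"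
  have "\<exists>J. ?indep J \<and> (\<forall>J'. ?indep J' \<longrightarrow> card J' \<le> card J)"
  proof (rule ex_has_greatest_nat[where b = "Suc (dim_col M)"])
    show "?indep {}" by (simp add: cols_independent_def)
    show "\<forall>J. ?indep J \<longrightarrow> card J < Suc (dim_col M)"
    proof (intro allI impI)
      fix J assume "?indep J"
      then have "card J \<le> card {..<dim_col M}" by (intro card_mono) auto
      then show "card J < Suc (dim_col M)" by simp
    qed
  qed
  then obtain J where J: "J \<subseteq> {..<dim_col M}" "cols_independent M J"
    and max: "\<And>J'. ?indep J' \<Longrightarrow> card J' \<le> card J" by blast
  have fin: "finite J" using J(1) finite_subset by blast
  have "\<exists>g. col_comb M J g = col M j" if j: "j < dim_col M" for j
  proof (cases "j \<in> J")
    case True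
    then show ?thesis using col_comb_indicator[OF fin] by blast
  next
    case False
    have "card (insert j J) > card J" using False fin by simp
    then have "\<not> cols_independent M (insert j J)" using max[of "insert j J"] J(1) j by auto
    then show ?thesis using col_comb_of_dependent_insert[OF fin False J(2)] by blast
  qed
  with J that show ?thesis by blast
qed

lemma col_submat_mult_vec_eq_0_imp:
  assumes fin: "finite J" and indep: "cols_independent M J"
    and x: "x \<in> carrier_vec (card J)" and Mx: "col_submat M J *\<^sub>v x = 0\<^sub>v (dim_row M)"
  shows "x = 0\<^sub>v (card J)"
proof -
  let ?L = "sorted_list_of_set J"
  have x_vec: "x = vec (card J) (\<lambda>k. x $ sorted_index J (?L ! k))"
    using x sorted_index_nth[OF fin] by (intro eq_vecI) simp_all
  have "col_comb M J (\<lambda>i. x $ sorted_index J i) = 0\<^sub>v (dim_row M)"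
    using Mx col_submat_mult_vec[OF fin, of M "\<lambda>i. x $ sorted_index J i"] x_vec by simp
  then have "x $ sorted_index J (?L ! k) = 0" if "k < card J" for k
    using indep nth_sorted_list_of_set_mem[OF fin that] unfolding cols_independent_def by blast
  then show ?thesis by (subst x_vec) (auto simp: x)
qed

lemma transpose_mult_vec_eq_0_imp_unit_cols:
  fixes G :: "real mat"
  assumes G: "G \<in> carrier_mat r s" and p: "\<And>k. k < r \<Longrightarrow> p k < s"
    and unit: "\<And>k k'. k < r \<Longrightarrow> k' < r \<Longrightarrow> G $$ (k', p k) = of_bool (k' = k)"
    and x: "x \<in> carrier_vec r" and Gx: "transpose_mat G *\<^sub>v x = 0\<^sub>v s"
  shows "x = 0\<^sub>v r"
proof (rule eq_vecI)
  fix k assume "k < dim_vec (0\<^sub>v r :: real vec)"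
  then have k: "k < r" by simp
  have "(transpose_mat G *\<^sub>v x) $ p k = (\<Sum>k'\<in>{0..<r}. G $$ (k', p k) * x $ k')"
    using G x p[OF k] by (simp add: scalar_prod_def)
  also have "\<dots> = (\<Sum>k'\<in>{0..<r}. of_bool (k' = k) * x $ k')" using unit[OF k] by simp
  also have "\<dots> = x $ k" using k by simp
  finally show "x $ k = 0\<^sub>v r $ k" using Gx p[OF k] k by simp
qed (use x in simp)

lemma full_rank_factorization:
  fixes M :: "real mat"
  assumes M: "M \<in> carrier_mat m s"
  obtains F r G where "F \<in> carrier_mat m r" "G \<in> carrier_mat r s" "M = F * G"
    "\<And>x. x \<in> carrier_vec r \<Longrightarrow> F *\<^sub>v x = 0\<^sub>v m \<Longrightarrow> x = 0\<^sub>v r"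
    "\<And>x. x \<in> carrier_vec r \<Longrightarrow> transpose_mat G *\<^sub>v x = 0\<^sub>v s \<Longrightarrow> x = 0\<^sub>v r"
proof -
  obtain J where J: "J \<subseteq> {..<s}" and indep: "cols_independent M J"
    and span: "\<And>j. j < s \<Longrightarrow> \<exists>g. col_comb M J g = col M j"
    using maximal_independent_columns[of M] M by auto
  have fin: "finite J" using J finite_subset by blast
  define L where "L = sorted_list_of_set J"
  define r where "r = card J"
  have L_mem: "L ! k \<in> J" if "k < r" for k
    using nth_sorted_list_of_set_mem[OF fin] that by (simp add: L_def r_def)
  txt \<open>Unit coefficients for the columns in \<open>J\<close> make \<open>G\<close> contain an identity submatrix.\<close>
  define g where "g j = (if j \<in> J then (\<lambda>i. of_bool (i = j))
    else (SOME g. col_comb M J g = col M j))" for j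
  have g: "col_comb M J (g j) = col M j" if "j < s" for j
  proof (cases "j \<in> J")
    case True
    then show ?thesis using col_comb_indicator[OF fin] by (simp add: g_def)
  next
    case False
    then show ?thesis using someI_ex[OF span[OF that]] by (simp add: g_def)
  qed
  define F where "F = col_submat M J"
  define G where "G = mat r s (\<lambda>(k, j). g j (L ! k))"
  have F: "F \<in> carrier_mat m r" using M by (simp add: F_def col_submat_def r_def)
  have G: "G \<in> carrier_mat r s" by (simp add: G_def)
  have "M = F * G"
  proof (rule mat_col_eqI)
    fix j assume "j < dim_col (F * G)"
    then have j: "j < s" using G by simp
    have "col (F * G) j = F *\<^sub>v vec r (\<lambda>k. g j (L ! k))"
      using col_mult2[OF F G j] j by (simp add: G_def)
    also have "\<dots> = col M j"
      unfolding F_def L_def r_def col_submat_mult_vec[OF fin] by (rule g[OF j])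
    finally show "col M j = col (F * G) j" ..
  qed (use M F G in auto)
  moreover have "x = 0\<^sub>v r" if "x \<in> carrier_vec r" "F *\<^sub>v x = 0\<^sub>v m" for x
    using col_submat_mult_vec_eq_0_imp[OF fin indep, of x] that M by (simp add: F_def r_def)
  moreover have "x = 0\<^sub>v r" if "x \<in> carrier_vec r" "transpose_mat G *\<^sub>v x = 0\<^sub>v s" for x
  proof (rule transpose_mult_vec_eq_0_imp_unit_cols[OF G _ _ that])
    show "L ! k < s" if "k < r" for k using L_mem[OF that] J by auto
    show "G $$ (k', L ! k) = of_bool (k' = k)" if "k < r" "k' < r" for k k'
      using that L_mem[OF that(1)] J nth_sorted_list_of_set_eq_iff[OF fin, of k' k]
      by (auto simp: G_def g_def L_def r_def)
  qed
  ultimately show ?thesis using that F G by blast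
qed

section \<open>The Moore--Penrose pseudoinverse\<close>

lemma gram_mult_vec_eq_0_imp:
  fixes F :: "real mat"
  assumes F: "F \<in> carrier_mat a b" and x: "x \<in> carrier_vec b"
    and Gx: "(transpose_mat F * F) *\<^sub>v x = 0\<^sub>v b"
  shows "F *\<^sub>v x = 0\<^sub>v a"
proof -
  have "(F *\<^sub>v x) \<bullet> (F *\<^sub>v x) = (transpose_mat F *\<^sub>v (F *\<^sub>v x)) \<bullet> x"
    using transpose_vec_mult_scalar[OF F x, of "F *\<^sub>v x"] F x by simp
  also have "\<dots> = 0" using Gx F x by (simp add: assoc_mult_mat_vec[of _ b a])
  finally show ?thesis using scalar_prod_self_eq_0_iff[of "F *\<^sub>v x" a] F x by simp
qed

lemma symmetric_nonsingular_inverse: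
  fixes C :: "real mat"
  assumes C: "C \<in> carrier_mat n n" and sym: "transpose_mat C = C"
    and ker: "\<And>x. x \<in> carrier_vec n \<Longrightarrow> C *\<^sub>v x = 0\<^sub>v n \<Longrightarrow> x = 0\<^sub>v n"
  obtains H where "H \<in> carrier_mat n n" "C * H = 1\<^sub>m n" "H * C = 1\<^sub>m n" "transpose_mat H = H"
proof -
  have d: "det C \<noteq> 0" using det_0_iff_vec_prod_zero[OF C] ker by auto
  define H where "H = (1 / det C) \<cdot>\<^sub>m adj_mat C"
  have H: "H \<in> carrier_mat n n" unfolding H_def using adj_mat(1)[OF C] by simp
  have CH: "C * H = 1\<^sub>m n"
    unfolding H_def using mult_smult_distrib[OF C adj_mat(1)[OF C]] adj_mat(2)[OF C] d
    by (auto intro!: eq_matI)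
  have HC: "H * C = 1\<^sub>m n"
    unfolding H_def using mult_smult_assoc_mat[OF adj_mat(1)[OF C] C] adj_mat(3)[OF C] d
    by (auto intro!: eq_matI)
  have "transpose_mat H = transpose_mat H * (C * H)" using CH H by simp
  also have "\<dots> = transpose_mat (C * H) * H"
    using H C by (simp add: transpose_mult[OF C H] sym assoc_mult_mat[of _ n n])
  also have "\<dots> = H" using CH H by simp
  finally show ?thesis using that H CH HC by blast
qed

lemma gram_inverse:
  fixes F :: "real mat"
  assumes F: "F \<in> carrier_mat a b"
    and ker: "\<And>x. x \<in> carrier_vec b \<Longrightarrow> F *\<^sub>v x = 0\<^sub>v a \<Longrightarrow> x = 0\<^sub>v b"
  shows "\<exists>H \<in> carrier_mat b b. (transpose_mat F * F) * H = 1\<^sub>m b \<and>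
    H * (transpose_mat F * F) = 1\<^sub>m b \<and> transpose_mat H = H"
proof (rule symmetric_nonsingular_inverse)
  show "transpose_mat F * F \<in> carrier_mat b b" using F by simp
  show "transpose_mat (transpose_mat F * F) = transpose_mat F * F"
    using F by (simp add: transpose_mult[of _ b a])
  show "x = 0\<^sub>v b" if "x \<in> carrier_vec b" "(transpose_mat F * F) *\<^sub>v x = 0\<^sub>v b" for x
    using ker gram_mult_vec_eq_0_imp[OF F] that by blast
qed blast

definition penrose_inverse :: "real mat \<Rightarrow> real mat \<Rightarrow> bool" where
  "penrose_inverse M B \<longleftrightarrow> B \<in> carrier_mat (dim_col M) (dim_row M) \<and>
      M * B * M = M \<and> B * M * B = B \<and>
      transpose_mat (M * B) = M * B \<and> transpose_mat (B * M) = B * M"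

lemma symmetric_mult_commute:
  fixes P Q :: "real mat"
  assumes "P \<in> carrier_mat n n" "Q \<in> carrier_mat n n" "transpose_mat P = P" "transpose_mat Q = Q"
    and "transpose_mat (P * Q) = P * Q"
  shows "Q * P = P * Q"
proof -
  have "Q * P = transpose_mat (P * Q)" using assms(1-4) transpose_mult[of P n n Q n] by simp
  then show ?thesis using assms(5) by simp
qed

lemma penrose_inverse_unique:
  assumes p1: "penrose_inverse M B1" and p2: "penrose_inverse M B2"
  shows "B1 = B2"
proof -
  define m s where "m = dim_row M" and "s = dim_col M"
  have M: "M \<in> carrier_mat m s" by (simp add: m_def s_def)
  have B1: "B1 \<in> carrier_mat s m" and B2: "B2 \<in> carrier_mat s m"
    using p1 p2 by (auto simp: penrose_inverse_def m_def s_def)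
  have MBM: "M * B1 * M = M" "M * B2 * M = M" and BMB: "B1 * M * B1 = B1" "B2 * M * B2 = B2"
    and sym_MB: "transpose_mat (M * B1) = M * B1" "transpose_mat (M * B2) = M * B2"
    and sym_BM: "transpose_mat (B1 * M) = B1 * M" "transpose_mat (B2 * M) = B2 * M"
    using p1 p2 by (simp_all add: penrose_inverse_def)
  have MB: "M * B1 = M * B2"
  proof -
    have "M * B1 * (M * B2) = M * B1 * M * B2"
      using assoc_mult_mat[OF mult_carrier_mat[OF M B1] M B2] by simp
    then have 1: "M * B1 * (M * B2) = M * B2" using MBM(1) by simp
    have "M * B2 * (M * B1) = M * B2 * M * B1"
      using assoc_mult_mat[OF mult_carrier_mat[OF M B2] M B1] by simp
    then have 2: "M * B2 * (M * B1) = M * B1" using MBM(2) by simp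
    have "M * B2 * (M * B1) = M * B1 * (M * B2)"
      by (rule symmetric_mult_commute[of _ m]) (use M B1 B2 sym_MB 1 in auto)
    then show ?thesis using 1 2 by simp
  qed
  have BM: "B1 * M = B2 * M"
  proof -
    have "B1 * M * (B2 * M) = B1 * (M * B2 * M)"
      using assoc_mult_mat[OF B1 M mult_carrier_mat[OF B2 M]] assoc_mult_mat[OF M B2 M] by simp
    then have 1: "B1 * M * (B2 * M) = B1 * M" using MBM(2) by simp
    have "B2 * M * (B1 * M) = B2 * (M * B1 * M)"
      using assoc_mult_mat[OF B2 M mult_carrier_mat[OF B1 M]] assoc_mult_mat[OF M B1 M] by simp
    then have 2: "B2 * M * (B1 * M) = B2 * M" using MBM(1) by simp
    have "B2 * M * (B1 * M) = B1 * M * (B2 * M)"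
      by (rule symmetric_mult_commute[of _ s]) (use M B1 B2 sym_BM 1 in auto)
    then show ?thesis using 1 2 by simp
  qed
  have "B1 = B1 * (M * B1)" using BMB(1) assoc_mult_mat[OF B1 M B1] by simp
  also have "\<dots> = B2 * M * B2" using MB BM assoc_mult_mat[OF B1 M B2] by simp
  also have "\<dots> = B2" by (rule BMB(2))
  finally show ?thesis .
qed

lemma penrose_inverse_full_rank_factorization:
  fixes F G H1 H2 :: "real mat"
  assumes F: "F \<in> carrier_mat m r" and G: "G \<in> carrier_mat r s"
    and H1: "H1 \<in> carrier_mat r r" "H1 * (transpose_mat F * F) = 1\<^sub>m r" "transpose_mat H1 = H1"
    and H2: "H2 \<in> carrier_mat r r" "(G * transpose_mat G) * H2 = 1\<^sub>m r" "transpose_mat H2 = H2"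
  shows "penrose_inverse (F * G) (transpose_mat G * H2 * H1 * transpose_mat F)"
proof -
  have assoc: "(A * B) * C = A * (B * C)" if "dim_col A = dim_row B" "dim_col B = dim_row C"
    for A B C :: "real mat"
    using that by (intro assoc_mult_mat[of A "dim_row A" "dim_col A" B "dim_col B" C "dim_col C"]) auto
  have transp: "transpose_mat (A * B) = transpose_mat B * transpose_mat A" if "dim_col A = dim_row B"
    for A B :: "real mat"
    using that by (intro transpose_mult[of A "dim_row A" "dim_col A" B "dim_col B"]) auto
  have dims: "dim_row F = m" "dim_col F = r" "dim_row G = r" "dim_col G = s"
    "dim_row H1 = r" "dim_col H1 = r" "dim_row H2 = r" "dim_col H2 = r"
    using F G H1 H2 by auto
  have cancel_F: "H1 * (transpose_mat F * (F * Y)) = Y" if "dim_row Y = r" for Y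
    using that H1 dims by (simp add: assoc[symmetric])
  have cancel_G: "G * (transpose_mat G * (H2 * Y)) = Y" if "dim_row Y = r" for Y
    using that H2 dims by (simp add: assoc[symmetric])
  have "transpose_mat G * H2 * H1 * transpose_mat F \<in> carrier_mat s m"
    using F G H1(1) H2(1) by (meson mult_carrier_mat transpose_carrier_mat)
  then show ?thesis
    unfolding penrose_inverse_def
    by (simp add: assoc dims cancel_F cancel_G transp H1(3) H2(3))
qed

lemma penrose_inverse_pinv: "penrose_inverse M (pinv M)"
proof -
  have M: "M \<in> carrier_mat (dim_row M) (dim_col M)" by simp
  obtain F r G where F: "F \<in> carrier_mat (dim_row M) r" and G: "G \<in> carrier_mat r (dim_col M)"
    and MFG: "M = F * G"
    and kerF: "\<And>x. x \<in> carrier_vec r \<Longrightarrow> F *\<^sub>v x = 0\<^sub>v (dim_row M) \<Longrightarrow> x = 0\<^sub>v r"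
    and kerGt: "\<And>x. x \<in> carrier_vec r \<Longrightarrow> transpose_mat G *\<^sub>v x = 0\<^sub>v (dim_col M) \<Longrightarrow> x = 0\<^sub>v r"
    using full_rank_factorization[OF M] by blast
  obtain H1 where H1: "H1 \<in> carrier_mat r r" "H1 * (transpose_mat F * F) = 1\<^sub>m r" "transpose_mat H1 = H1"
    using gram_inverse[OF F kerF] by blast
  have Gt: "transpose_mat G \<in> carrier_mat (dim_col M) r" using G by simp
  obtain H2 where H2: "H2 \<in> carrier_mat r r" "(G * transpose_mat G) * H2 = 1\<^sub>m r" "transpose_mat H2 = H2"
    using gram_inverse[OF Gt kerGt] by auto
  have "penrose_inverse M (transpose_mat G * H2 * H1 * transpose_mat F)"
    unfolding MFG by (rule penrose_inverse_full_rank_factorization[OF F G H1 H2])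
  then have "\<exists>!B. penrose_inverse M B" using penrose_inverse_unique by blast
  then show ?thesis
    unfolding pinv_def penrose_inverse_def[symmetric] by (rule theI')
qed

section \<open>Least squares\<close>

lemma pinv_normal_equation:
  assumes y: "y \<in> carrier_vec (dim_row M)"
  shows "transpose_mat M *\<^sub>v (M *\<^sub>v (pinv M *\<^sub>v y) - y) = 0\<^sub>v (dim_col M)"
proof -
  define B where "B = pinv M"
  have M: "M \<in> carrier_mat (dim_row M) (dim_col M)" by simp
  have B: "B \<in> carrier_mat (dim_col M) (dim_row M)"
    using penrose_inverse_pinv[of M] by (simp add: B_def penrose_inverse_def)
  have "transpose_mat M * (M * B) = transpose_mat M * transpose_mat (M * B)"
    using penrose_inverse_pinv[of M] by (simp add: B_def penrose_inverse_def)
  also have "\<dots> = transpose_mat (M * B * M)" using transpose_mult[OF mult_carrier_mat[OF M B] M] by simp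
  also have "\<dots> = transpose_mat M" using penrose_inverse_pinv[of M] by (simp add: B_def penrose_inverse_def)
  finally have MtMB: "transpose_mat M * (M * B) = transpose_mat M" .
  have Mt: "transpose_mat M \<in> carrier_mat (dim_col M) (dim_row M)" by simp
  have MBy: "M *\<^sub>v (B *\<^sub>v y) \<in> carrier_vec (dim_row M)"
    by (rule mult_mat_vec_carrier[OF M mult_mat_vec_carrier[OF B y]])
  have "transpose_mat M *\<^sub>v (M *\<^sub>v (B *\<^sub>v y)) = transpose_mat M *\<^sub>v ((M * B) *\<^sub>v y)"
    using assoc_mult_mat_vec[OF M B y] by simp
  also have "\<dots> = (transpose_mat M * (M * B)) *\<^sub>v y"
    by (rule assoc_mult_mat_vec[OF Mt mult_carrier_mat[OF M B] y, symmetric])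
  also have "\<dots> = transpose_mat M *\<^sub>v y" by (simp only: MtMB)
  finally have "transpose_mat M *\<^sub>v (M *\<^sub>v (B *\<^sub>v y) - y) = transpose_mat M *\<^sub>v y - transpose_mat M *\<^sub>v y"
    using mult_minus_distrib_mat_vec[OF Mt MBy y] by simp
  also have "\<dots> = 0\<^sub>v (dim_col M)" by (rule minus_cancel_vec[OF mult_mat_vec_carrier[OF Mt y]])
  finally show ?thesis by (simp only: B_def)
qed

lemma least_squares_of_normal_equation:
  fixes M :: "real mat"
  assumes M: "M \<in> carrier_mat m s" and y: "y \<in> carrier_vec m"
    and z: "z \<in> carrier_vec s" and w: "w \<in> carrier_vec s"
    and normal: "transpose_mat M *\<^sub>v (M *\<^sub>v z - y) = 0\<^sub>v s"
  shows "(M *\<^sub>v z - y) \<bullet> (M *\<^sub>v z - y) \<le> (M *\<^sub>v w - y) \<bullet> (M *\<^sub>v w - y)"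
proof -
  define a where "a = M *\<^sub>v (w - z)"
  define b where "b = M *\<^sub>v z - y"
  have a: "a \<in> carrier_vec m" and b: "b \<in> carrier_vec m" using M y z w by (auto simp: a_def b_def)
  have "M *\<^sub>v w - y = a + b"
    using M y z w by (intro eq_vecI) (auto simp: a_def b_def mult_minus_distrib_mat_vec[OF M w z])
  moreover have "a \<bullet> b = 0"
  proof -
    have "b \<bullet> a = (transpose_mat M *\<^sub>v b) \<bullet> (w - z)"
      unfolding a_def using transpose_vec_mult_scalar[OF M _ b, of "w - z"] z w by simp
    then show ?thesis using normal comm_scalar_prod[OF a b] z w by (simp add: b_def)
  qed
  ultimately show ?thesis
    using scalar_prod_self_add_orthogonal[OF a b] scalar_prod_self_nonneg[of a] by (simp add: b_def)
qed

lemma pinv_sol_in_ls_argmin: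
  fixes A :: "real mat"
  assumes A: "A \<in> carrier_mat m n" and y: "y \<in> carrier_vec m" and S: "S \<subseteq> {..<n}"
  shows "pinv_sol A y S \<in> ls_argmin A y S"
proof -
  have fin: "finite S" using S finite_subset by blast
  define M where "M = col_submat A S"
  have M: "M \<in> carrier_mat m (card S)" using A by (simp add: M_def col_submat_def)
  define z where "z = pinv M *\<^sub>v y"
  have z: "z \<in> carrier_vec (card S)"
    using penrose_inverse_pinv[of M] M y by (auto simp: z_def penrose_inverse_def)
  define x where "x = pinv_sol A y S"
  have x_def': "x = vec n (\<lambda>i. if i \<in> S then z $ sorted_index S i else 0)"
    unfolding x_def pinv_sol_def z_def M_def sorted_index_def Let_def using A by simp
  have x: "x \<in> carrier_vec n" and supp: "supp_vec x \<subseteq> S"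
    by (auto simp: x_def' supp_vec_def split: if_splits)
  have restrict: "A *\<^sub>v v = M *\<^sub>v vec (card S) (\<lambda>k. v $ (sorted_list_of_set S ! k))"
    if "v \<in> carrier_vec n" "supp_vec v \<subseteq> S" for v
    using mult_mat_vec_eq_col_comb[OF A that(1) S that(2)] col_submat_mult_vec[OF fin]
    by (simp add: M_def)
  have "vec (card S) (\<lambda>k. x $ (sorted_list_of_set S ! k)) = z"
  proof (rule eq_vecI)
    fix k assume "k < dim_vec z"
    then have k: "k < card S" using z by simp
    then have "sorted_list_of_set S ! k \<in> S" "sorted_list_of_set S ! k < n"
      using nth_sorted_list_of_set_mem[OF fin] S by auto
    then show "vec (card S) (\<lambda>k. x $ (sorted_list_of_set S ! k)) $ k = z $ k"
      using k by (simp add: x_def' sorted_index_nth[OF fin])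
  qed (use z in simp)
  then have Ax: "A *\<^sub>v x = M *\<^sub>v z" using restrict[OF x supp] by simp
  have "sq_resid A y x \<le> sq_resid A y v" if v: "v \<in> carrier_vec n" "supp_vec v \<subseteq> S" for v
    unfolding sq_resid_def Ax restrict[OF v]
    by (rule least_squares_of_normal_equation[OF M y z])
      (use M y in \<open>auto simp: z_def pinv_normal_equation\<close>)
  then show ?thesis using x supp A by (auto simp: ls_argmin_def x_def)
qed

section \<open>The support exploration iterates\<close>

lemma abs_le_norm_inf_vec: "i < dim_vec x \<Longrightarrow> \<bar>x $ i\<bar> \<le> norm_inf_vec x"
  unfolding norm_inf_vec_def by (rule Max_ge) (auto simp: setcompr_eq_image)

lemma norm_inf_vec_nonneg: "0 \<le> norm_inf_vec x"
  unfolding norm_inf_vec_def by (rule Max_ge) (auto simp: setcompr_eq_image)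

lemma not_in_largest_imp_dominated:
  assumes T: "T \<subseteq> {..<dim_vec X}" "card T \<le> k" and i: "i \<in> T" "i \<notin> largest k X"
  shows "\<exists>j<dim_vec X. j \<notin> T \<and> \<bar>X $ i\<bar> \<le> \<bar>X $ j\<bar>"
proof (rule ccontr)
  assume not_dominated: "\<not> ?thesis"
  have fin: "finite T" using T(1) finite_subset by blast
  have "{j. j < dim_vec X \<and> beats X j i} \<subseteq> T - {i}"
    using not_dominated by (auto simp: beats_def)
  then have "card {j. j < dim_vec X \<and> beats X j i} \<le> card T - 1"
    using card_mono[of "T - {i}"] fin i by fastforce
  moreover have "card T > 0" using i fin card_gt_0_iff by blast
  ultimately have "i \<in> largest k X" using T i by (auto simp: largest_def)
  with i show False by blast
qed

locale oracle_sea =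
  fixes xs :: "real vec" and Ss :: "nat set" and k :: nat and \<eta> :: real and X0 :: "real vec"
  assumes dim_X0: "dim_vec X0 = dim_vec xs"
    and Ss_eq: "Ss = supp_vec xs"
    and Ss_nonempty: "Ss \<noteq> {}"
    and card_Ss_le: "card Ss \<le> k"
    and eta_pos: "0 < \<eta>"
begin

abbreviation X :: "nat \<Rightarrow> real vec" where
  "X \<equiv> sea_X xs Ss k \<eta> X0"

lemma Ss_subset: "Ss \<subseteq> {..<dim_vec xs}"
  by (auto simp: Ss_eq supp_vec_def)

lemma finite_Ss: "finite Ss"
  using Ss_subset finite_subset by blast

lemma dim_X: "dim_vec (X t) = dim_vec xs"
  by (cases t) (simp_all add: dim_X0 oracle_u_def)

definition miss_count :: "nat \<Rightarrow> nat \<Rightarrow> real" where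
  "miss_count i t = (\<Sum>s<t. of_bool (i \<notin> largest k (X s)))"

lemma miss_count_0 [simp]: "miss_count i 0 = 0"
  by (simp add: miss_count_def)

lemma miss_count_Suc: "miss_count i (Suc t) = miss_count i t + of_bool (i \<notin> largest k (X t))"
  unfolding miss_count_def by (rule sum.lessThan_Suc)

lemma miss_count_nonneg: "0 \<le> miss_count i t"
  unfolding miss_count_def by (rule sum_nonneg) simp

lemma X_nth_outside: "i < dim_vec xs \<Longrightarrow> i \<notin> Ss \<Longrightarrow> X t $ i = X0 $ i"
  by (induction t) (simp_all add: oracle_u_def)

lemma X_nth_support:
  assumes i: "i \<in> Ss"
  shows "X t $ i = X0 $ i + miss_count i t * \<eta> * xs $ i"
proof (induction t)
  case 0
  then show ?case by simp
next
  case (Suc t)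
  have "i < dim_vec xs" using i Ss_subset by auto
  with Suc i show ?case
    by (cases "i \<in> largest k (X t)") (simp_all add: oracle_u_def miss_count_Suc algebra_simps)
qed

lemma miss_count_when_missed:
  assumes i: "i \<in> Ss" "i \<notin> largest k (X t)"
  shows "miss_count i t * (\<eta> * \<bar>xs $ i\<bar>) \<le> 2 * norm_inf_vec X0"
proof -
  obtain j where j: "j < dim_vec xs" "j \<notin> Ss" "\<bar>X t $ i\<bar> \<le> \<bar>X t $ j\<bar>"
    using not_in_largest_imp_dominated[of Ss "X t" k i] Ss_subset card_Ss_le i dim_X by auto
  have "\<bar>X t $ i\<bar> \<le> norm_inf_vec X0"
    using j X_nth_outside abs_le_norm_inf_vec[of j X0] dim_X0 by simp
  moreover have "\<bar>X0 $ i\<bar> \<le> norm_inf_vec X0"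
    using i Ss_subset abs_le_norm_inf_vec[of i X0] dim_X0 by auto
  ultimately have "\<bar>miss_count i t * \<eta> * xs $ i\<bar> \<le> 2 * norm_inf_vec X0"
    using X_nth_support[OF i(1), of t] by linarith
  then show ?thesis using miss_count_nonneg eta_pos by (simp add: abs_mult mult.assoc)
qed

definition min_abs_support :: real where
  "min_abs_support = Min {\<bar>xs $ i\<bar> | i. i \<in> Ss}"

lemma min_abs_support_eq: "min_abs_support = Min ((\<lambda>i. \<bar>xs $ i\<bar>) ` Ss)"
  unfolding min_abs_support_def by (metis Setcompr_eq_image)

lemma min_abs_support_le: "i \<in> Ss \<Longrightarrow> min_abs_support \<le> \<bar>xs $ i\<bar>"
  unfolding min_abs_support_eq using finite_Ss by (intro Min_le) auto

lemma min_abs_support_pos: "0 < min_abs_support"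
proof -
  have "min_abs_support \<in> (\<lambda>i. \<bar>xs $ i\<bar>) ` Ss"
    unfolding min_abs_support_eq using finite_Ss Ss_nonempty by (intro Min_in) auto
  then show ?thesis by (auto simp: Ss_eq supp_vec_def)
qed

definition miss_bound :: real where
  "miss_bound = 1 + 2 * norm_inf_vec X0 / (\<eta> * min_abs_support)"

lemma miss_count_le: "i \<in> Ss \<Longrightarrow> miss_count i t \<le> miss_bound"
proof (induction t)
  case 0
  then show ?case
    using norm_inf_vec_nonneg[of X0] eta_pos min_abs_support_pos
    by (simp add: miss_bound_def)
next
  case (Suc t)
  show ?case
  proof (cases "i \<in> largest k (X t)")
    case True
    then show ?thesis using Suc by (simp add: miss_count_Suc)
  next
    case False
    have "miss_count i t * (\<eta> * min_abs_support) \<le> miss_count i t * (\<eta> * \<bar>xs $ i\<bar>)"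
      using min_abs_support_le[OF Suc.prems] miss_count_nonneg eta_pos
      by (intro mult_left_mono) auto
    also have "\<dots> \<le> 2 * norm_inf_vec X0" by (rule miss_count_when_missed[OF Suc.prems False])
    finally have "miss_count i t \<le> 2 * norm_inf_vec X0 / (\<eta> * min_abs_support)"
      using eta_pos min_abs_support_pos by (simp add: pos_le_divide_eq)
    then show ?thesis using False by (simp add: miss_count_Suc miss_bound_def)
  qed
qed

lemma steps_le_total_misses:
  assumes "\<forall>s<t. \<not> Ss \<subseteq> largest k (X s)"
  shows "real t \<le> (\<Sum>i\<in>Ss. miss_count i t)"
proof -
  have "(\<Sum>s<t. 1) \<le> (\<Sum>s<t. \<Sum>i\<in>Ss. of_bool (i \<notin> largest k (X s)) :: real)"
  proof (rule sum_mono)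
    fix s assume "s \<in> {..<t}"
    then obtain i where "i \<in> Ss" "i \<notin> largest k (X s)" using assms by blast
    then show "1 \<le> (\<Sum>i\<in>Ss. of_bool (i \<notin> largest k (X s)) :: real)"
      using member_le_sum[of i Ss "\<lambda>i. of_bool (i \<notin> largest k (X s)) :: real"] finite_Ss by simp
  qed
  also have "\<dots> = (\<Sum>i\<in>Ss. miss_count i t)"
    unfolding miss_count_def by (rule sum.swap)
  finally show ?thesis by simp
qed

lemma total_misses_le: "(\<Sum>i\<in>Ss. miss_count i t) \<le> real k * miss_bound"
proof -
  have "(\<Sum>i\<in>Ss. miss_count i t) \<le> real (card Ss) * miss_bound"
    using sum_bounded_above[of Ss "\<lambda>i. miss_count i t"] miss_count_le by simp
  also have "\<dots> \<le> real k * miss_bound"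
    using card_Ss_le miss_count_le[of _ 0] miss_count_nonneg Ss_nonempty
    by (intro mult_right_mono) fastforce+
  finally show ?thesis .
qed

lemma sea_u_eq_0_iff: "sea_u xs Ss k \<eta> X0 t = 0\<^sub>v (dim_vec xs) \<longleftrightarrow> Ss \<subseteq> sea_S xs Ss k \<eta> X0 t"
proof -
  have "sea_u xs Ss k \<eta> X0 t = 0\<^sub>v (dim_vec xs) \<longleftrightarrow>
      (\<forall>i<dim_vec xs. i \<in> Ss \<and> i \<notin> largest k (X t) \<longrightarrow> \<eta> * xs $ i = 0)"
    by (auto simp: sea_u_def oracle_u_def vec_eq_iff)
  also have "\<dots> \<longleftrightarrow> Ss \<subseteq> largest k (X t)"
    using eta_pos Ss_subset by (auto simp: Ss_eq supp_vec_def)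
  finally show ?thesis by (simp add: sea_S_def)
qed

definition stop_time :: nat where
  "stop_time = (LEAST t. sea_u xs Ss k \<eta> X0 t = 0\<^sub>v (dim_vec xs))"

lemma ex_sea_u_eq_0: "\<exists>t. sea_u xs Ss k \<eta> X0 t = 0\<^sub>v (dim_vec xs)"
proof (rule ccontr)
  assume "\<not> ?thesis"
  then have "real t \<le> real k * miss_bound" for t
    using steps_le_total_misses[of t] total_misses_le[of t] sea_u_eq_0_iff
    by (force simp: sea_S_def)
  from this[of "nat \<lceil>real k * miss_bound\<rceil> + 1"] show False by linarith
qed

lemma sea_u_stop_time: "sea_u xs Ss k \<eta> X0 stop_time = 0\<^sub>v (dim_vec xs)"
  unfolding stop_time_def using ex_sea_u_eq_0 by (rule LeastI_ex)

lemma stop_time_le: "real stop_time \<le> real k * miss_bound"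
proof -
  have "\<forall>s<stop_time. \<not> Ss \<subseteq> largest k (X s)"
    using not_less_Least[of _ "\<lambda>t. sea_u xs Ss k \<eta> X0 t = 0\<^sub>v (dim_vec xs)"] sea_u_eq_0_iff
    by (auto simp: stop_time_def sea_S_def)
  then show ?thesis using steps_le_total_misses total_misses_le order_trans by blast
qed

lemma sea_output_eq: "sea_output xs Ss k \<eta> y A X0 = pinv_sol A y (sea_S xs Ss k \<eta> X0 stop_time)"
  by (simp add: sea_output_def stop_time_def)

end

theorem theoremC1:
  fixes m n k :: nat and A :: "real mat" and xs e y X0 :: "real vec" and \<eta> :: real
    and Ss :: "nat set"
  assumes "0 < m" "0 < n" "0 < k"
    and "A \<in> carrier_mat m n" "xs \<in> carrier_vec n" "e \<in> carrier_vec m"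
    and "X0 \<in> carrier_vec n"
    and "Ss = supp_vec xs" "1 \<le> card Ss" "card Ss \<le> k"
    and "y = A *\<^sub>v xs + e"
    and "\<eta> > 0"
  shows "\<exists>ts::nat. real ts \<le> real k * (1 + 2 * norm_inf_vec X0 / (\<eta> * Min {\<bar>xs $ i\<bar> | i. i \<in> Ss}))
      \<and> Ss \<subseteq> sea_S xs Ss k \<eta> X0 ts
      \<and> sea_u xs Ss k \<eta> X0 ts = 0\<^sub>v n
      \<and> sea_output xs Ss k \<eta> y A X0 \<in> ls_argmin A y (sea_S xs Ss k \<eta> X0 ts)"
proof -
  interpret oracle_sea xs Ss k \<eta> X0
    using assms by unfold_locales auto
  have dim_xs: "dim_vec xs = n" using assms(5) by simp
  have "sea_S xs Ss k \<eta> X0 stop_time \<subseteq> {..<n}"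
    using dim_X[of stop_time] dim_xs by (auto simp: sea_S_def largest_def)
  then have "sea_output xs Ss k \<eta> y A X0 \<in> ls_argmin A y (sea_S xs Ss k \<eta> X0 stop_time)"
    unfolding sea_output_eq using pinv_sol_in_ls_argmin assms(4-6,11) by simp
  moreover have "Ss \<subseteq> sea_S xs Ss k \<eta> X0 stop_time"
    using sea_u_stop_time sea_u_eq_0_iff by blast
  ultimately show ?thesis
    using stop_time_le sea_u_stop_time dim_xs
    unfolding miss_bound_def min_abs_support_def by blast
qed

end
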